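(* For all integers $m<0$ and $n\geq 1$, \[ N(\leq m+1,n)-M(\leq m,n)=q(-m-1,n)-p(m+2,n). \]
   Context: For a partition $\lambda$, $\operatorname{rank}(\lambda)$ is its largest part minus its number of parts. $\operatorname{crank}(\lambda)$ is the largest part of $\lambda$ if $\lambda$ contains no part equal to $1$; otherwise it is the number of parts larger than the number of ones minus the number of ones. For $n\geq1$, $N(m,n)$ is the number of partitions of $n$ with rank $m$. For $n>1$, $M(m,n)$ is the number of partitions of $n$ with crank $m$. For $n=1$ one sets $M(0,1)=-1$, $M(\pm1,1)=1$ and $M(m,1)=0$ otherwise. The cumulative functions are $N(\leq m,n)=\sum_{r\leq m}N(r,n)$ and $M(\leq m,n)=\sum_{r\leq m}M(r,n)$. Define $p(m,n)=\sum_{r\geq m}N(r,n)$, the number of partitions of $n$ with rank at least $m$. For a partition $\lambda=(\lambda_1\geq\cdots\geq\lambda_\ell)$, its rank-set is the infinite sequence $[-\lambda_1,1-\lambda_2,\ldots,j-\lambda_{j+1},\ldots,\ell-1-\lambda_\ell,\ell,\ell+1,\ldots]$. Then $q(m,n)$ is the number of partitions of $n$ whose rank-set contains $m$. *)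

theory Defs
  imports Main
begin

definition partitions :: "nat \<Rightarrow> nat list set" where
  "partitions n = {xs. sorted_wrt (\<ge>) xs \<and> (\<forall>x\<in>set xs. 0 < x) \<and> sum_list xs = n}"

definition prank :: "nat list \<Rightarrow> int" where
  "prank xs = int (Max (set xs)) - int (length xs)"

definition pcrank :: "nat list \<Rightarrow> int" where
  "pcrank xs = (if 1 \<notin> set xs then int (Max (set xs))
     else int (length (filter (\<lambda>x. x > count_list xs 1) xs)) - int (count_list xs 1))"

definition N :: "int \<Rightarrow> nat \<Rightarrow> int" where
  "N m n = int (card {xs \<in> partitions n. prank xs = m})"

definition M :: "int \<Rightarrow> nat \<Rightarrow> int" where
  "M m n = (if n = 1 then (if m = 0 then -1 else if m = 1 \<or> m = -1 then 1 else 0)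
            else int (card {xs \<in> partitions n. pcrank xs = m}))"

text \<open>Cumulative functions: sums over all r \<le> m (only finitely many nonzero terms).\<close>
definition N_le :: "int \<Rightarrow> nat \<Rightarrow> int" where
  "N_le m n = (\<Sum>r\<in>{r. r \<le> m \<and> N r n \<noteq> 0}. N r n)"

definition M_le :: "int \<Rightarrow> nat \<Rightarrow> int" where
  "M_le m n = (\<Sum>r\<in>{r. r \<le> m \<and> M r n \<noteq> 0}. M r n)"

definition p :: "int \<Rightarrow> nat \<Rightarrow> int" where
  "p m n = int (card {xs \<in> partitions n. m \<le> prank xs})"

text \<open>Rank-set [-l_1, 1-l_2, ..., (len-1)-l_len, len, len+1, ...]; entry j (0-based) is j - xs!j.\<close>
definition rank_set :: "nat list \<Rightarrow> int set" where
  "rank_set xs = {int j - int (xs ! j) | j. j < length xs} \<union> {k. int (length xs) \<le> k}"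

definition q :: "int \<Rightarrow> nat \<Rightarrow> int" where
  "q m n = int (card {xs \<in> partitions n. m \<in> rank_set xs})"

end

theory Submission
  imports Defs
begin

text \<open>Put k = -m-1 and c = k+1. Since N(\<le>m+1,n) + p(m+2,n) and q(k,n) + #{\<lambda> : k \<notin> rank-set(\<lambda>)}
both equal p(n), the identity says that M(\<le>m,n) counts the partitions whose rank-set misses k.
For m < 0, M(\<le>m,n) counts the partitions whose number w of ones is at least c plus the number
of parts exceeding w. If j is the number of leading parts with \<lambda>_i > c + i (indices from 0),
removing c + j ones and inserting a part c + j in position j is a bijection onto the partitions
with a part \<lambda>_j = j + c. Since i < \<lambda>_j iff j < \<lambda>'_i for the conjugate \<lambda>', such a part
exists exactly when no i satisfies \<lambda>'_i + k = i, i.e. when k is not in the rank-set of \<lambda>'.\<close>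

abbreviation nonincreasing :: "nat list \<Rightarrow> bool" where
  "nonincreasing \<equiv> sorted_wrt (\<ge>)"

definition part :: "nat list \<Rightarrow> nat \<Rightarrow> nat" where
  "part xs j = (if j < length xs then xs ! j else 0)"

definition conjugate :: "nat list \<Rightarrow> nat list" where
  "conjugate xs = map (\<lambda>i. length (filter (\<lambda>x. i < x) xs)) [0..<part xs 0]"

lemma part_Nil [simp]: "part [] j = 0"
  by (simp add: part_def)

lemma part_Cons_0 [simp]: "part (x # xs) 0 = x"
  by (simp add: part_def)

lemma part_Cons_Suc [simp]: "part (x # xs) (Suc j) = part xs j"
  by (simp add: part_def)

lemma le_part_0: "nonincreasing xs \<Longrightarrow> x \<in> set xs \<Longrightarrow> x \<le> part xs 0"
  by (cases xs) auto

lemma part_le_hd: "nonincreasing (x # xs) \<Longrightarrow> part xs j \<le> x"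
  by (auto simp: part_def)

lemma less_length_filter_iff_less_part:
  "nonincreasing xs \<Longrightarrow> j < length (filter (\<lambda>x. i < x) xs) \<longleftrightarrow> i < part xs j"
proof (induction xs arbitrary: j)
  case Nil
  then show ?case by simp
next
  case (Cons x xs)
  show ?case
  proof (cases "i < x")
    case True
    then show ?thesis using Cons by (cases j) auto
  next
    case False
    then have "filter (\<lambda>x. i < x) xs = []"
      using Cons.prems by (auto simp: filter_empty_conv)
    moreover have "part (x # xs) j \<le> x"
      using Cons.prems by (cases j) (auto simp: part_le_hd)
    ultimately show ?thesis using False by auto
  qed
qed

lemma part_conjugate:
  assumes "nonincreasing xs"
  shows "part (conjugate xs) i = length (filter (\<lambda>x. i < x) xs)"
proof (cases "i < part xs 0")
  case True
  then show ?thesis by (simp add: part_def conjugate_def)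
next
  case False
  then have "filter (\<lambda>x. i < x) xs = []"
    using le_part_0[OF assms] by (fastforce simp: filter_empty_conv)
  then show ?thesis using False by (simp add: part_def conjugate_def)
qed

lemma less_part_conjugate_iff:
  "nonincreasing xs \<Longrightarrow> j < part (conjugate xs) i \<longleftrightarrow> i < part xs j"
  by (simp add: part_conjugate less_length_filter_iff_less_part)

lemma nonincreasing_conjugate: "nonincreasing (conjugate xs)"
proof -
  have "length (filter (\<lambda>x. b < x) xs) \<le> length (filter (\<lambda>x. a < x) xs)" if "a \<le> b" for a b
  proof -
    have "filter (\<lambda>x. b < x) xs = filter (\<lambda>x. b < x) (filter (\<lambda>x. a < x) xs)"
      using that by (auto simp: filter_filter intro: filter_cong)
    then show ?thesis by (metis length_filter_le)
  qed
  then show ?thesis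
    unfolding conjugate_def by (auto simp: sorted_wrt_iff_nth_less)
qed

lemma conjugate_pos: "y \<in> set (conjugate xs) \<Longrightarrow> 0 < y"
proof -
  assume "y \<in> set (conjugate xs)"
  then obtain i where "i < part xs 0" and y: "y = length (filter (\<lambda>x. i < x) xs)"
    by (auto simp: conjugate_def)
  then have "part xs 0 \<in> set (filter (\<lambda>x. i < x) xs)"
    by (cases xs) auto
  then show "0 < y" using y by (metis length_pos_if_in_set)
qed

lemma sum_list_length_filter_less:
  "(\<Sum>i\<leftarrow>[0..<K]. length (filter (\<lambda>x. i < x) xs)) = (\<Sum>x\<leftarrow>xs. min K x)"
proof (induction xs)
  case Nil
  then show ?case by (induction K) auto
next
  case (Cons x xs)
  have "(\<Sum>i\<leftarrow>[0..<K]. length (filter (\<lambda>y. i < y) (x # xs)))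
      = (\<Sum>i\<leftarrow>[0..<K]. (if i < x then 1 else 0) + length (filter (\<lambda>y. i < y) xs))"
    by (rule arg_cong[where f = sum_list]) auto
  also have "\<dots> = min K x + (\<Sum>y\<leftarrow>xs. min K y)"
  proof -
    have "(\<Sum>i\<leftarrow>[0..<K]. if i < x then 1 else 0) = min K x"
      by (induction K) auto
    then show ?thesis using Cons.IH by (simp add: sum_list_addf)
  qed
  finally show ?case by simp
qed

lemma sum_list_conjugate: "nonincreasing xs \<Longrightarrow> sum_list (conjugate xs) = sum_list xs"
  unfolding conjugate_def sum_list_length_filter_less
  by (metis (no_types, lifting) le_part_0 map_idI min.absorb2)

lemma part_inject:
  assumes "\<forall>x\<in>set xs. 0 < x" and "\<forall>y\<in>set ys. 0 < y" and "\<And>j. part xs j = part ys j"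
  shows "xs = ys"
proof -
  have "length xs = length ys"
    using assms by (metis nth_mem linorder_neqE_nat part_def less_irrefl)
  then show ?thesis
    using assms(3) by (metis nth_equalityI part_def)
qed

lemma conjugate_conjugate:
  assumes "nonincreasing xs" and "\<forall>x\<in>set xs. 0 < x"
  shows "conjugate (conjugate xs) = xs"
proof (rule part_inject)
  show "\<forall>y\<in>set (conjugate (conjugate xs)). 0 < y" by (auto intro: conjugate_pos)
  fix j
  have "t < part (conjugate (conjugate xs)) j \<longleftrightarrow> t < part xs j" for t
    using less_part_conjugate_iff nonincreasing_conjugate assms(1) by simp
  then show "part (conjugate (conjugate xs)) j = part xs j"
    by (metis less_irrefl nat_neq_iff)
qed (use assms in simp)

lemma conjugate_partitions: "xs \<in> partitions n \<Longrightarrow> conjugate xs \<in> partitions n"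
  unfolding partitions_def
  using nonincreasing_conjugate conjugate_pos sum_list_conjugate by auto

lemma card_partitions_conjugate:
  "card {xs \<in> partitions n. P (conjugate xs)} = card {xs \<in> partitions n. P xs}"
proof (rule bij_betw_same_card, rule bij_betw_byWitness[where f' = conjugate])
  have inv: "conjugate (conjugate xs) = xs" if "xs \<in> partitions n" for xs
    using that conjugate_conjugate unfolding partitions_def by simp
  then show "\<forall>xs\<in>{xs \<in> partitions n. P (conjugate xs)}. conjugate (conjugate xs) = xs"
    and "\<forall>xs\<in>{xs \<in> partitions n. P xs}. conjugate (conjugate xs) = xs"
    by auto
  show "conjugate ` {xs \<in> partitions n. P (conjugate xs)} \<subseteq> {xs \<in> partitions n. P xs}"
    "conjugate ` {xs \<in> partitions n. P xs} \<subseteq> {xs \<in> partitions n. P (conjugate xs)}"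
    using conjugate_partitions inv by auto
qed

lemma int_mem_rank_set_iff: "int k \<in> rank_set ys \<longleftrightarrow> (\<exists>i. part ys i + k = i)"
proof
  assume "int k \<in> rank_set ys"
  then consider j where "j < length ys" "int k = int j - int (ys ! j)" | "length ys \<le> k"
    unfolding rank_set_def by auto
  then show "\<exists>i. part ys i + k = i"
  proof cases
    case 1
    then have "part ys j + k = j" by (simp add: part_def)
    then show ?thesis ..
  next
    case 2
    then have "part ys k + k = k" by (simp add: part_def)
    then show ?thesis ..
  qed
next
  assume "\<exists>i. part ys i + k = i"
  then obtain i where i: "part ys i + k = i" ..
  show "int k \<in> rank_set ys"
  proof (cases "i < length ys")
    case True
    then have "int k = int i - int (ys ! i)" using i by (simp add: part_def)
    then show ?thesis using True unfolding rank_set_def by blast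
  next
    case False
    then show ?thesis using i unfolding rank_set_def by (simp add: part_def)
  qed
qed

lemma ex_part_eq_iff_not_mem_rank_set_conjugate:
  assumes xs: "nonincreasing xs"
  shows "(\<exists>j. part xs j = j + Suc k) \<longleftrightarrow> int k \<notin> rank_set (conjugate xs)"
  unfolding int_mem_rank_set_iff
proof
  assume "\<exists>j. part xs j = j + Suc k"
  then obtain j where j: "part xs j = j + Suc k" ..
  show "\<not> (\<exists>i. part (conjugate xs) i + k = i)"
  proof
    assume "\<exists>i. part (conjugate xs) i + k = i"
    then obtain i where "part (conjugate xs) i + k = i" ..
    then show False
      using j less_part_conjugate_iff[OF xs, of j i] by linarith
  qed
next
  txt \<open>?Q i + k - i is positive at 0, negative for large i and never 0; at the index i where
    it changes sign, duality forces part xs (i - k) = i + 1.\<close>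
  let ?Q = "part (conjugate xs)"
  assume no_fix: "\<not> (\<exists>i. ?Q i + k = i)"
  have step: "\<exists>i. P i \<and> \<not> P (Suc i)" if "P 0" "\<not> P N" for P :: "nat \<Rightarrow> bool" and N
    using that by (induction N) auto
  have "?Q i \<le> length xs" for i
    by (simp add: part_conjugate[OF xs])
  then have "\<not> length xs + k < ?Q (length xs + k) + k"
    by (simp add: not_less)
  moreover have "?Q 0 + k \<noteq> 0"
  proof
    assume "?Q 0 + k = 0"
    then show False using no_fix by blast
  qed
  ultimately obtain i where "i < ?Q i + k" and "\<not> Suc i < ?Q (Suc i) + k"
    using step[of "\<lambda>i. i < ?Q i + k" "length xs + k"] by auto
  moreover have "?Q (Suc i) + k \<noteq> Suc i" using no_fix by blast
  ultimately have "i - k < ?Q i" and "\<not> i - k < ?Q (Suc i)" and "k \<le> i"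
    by linarith+
  then have "i < part xs (i - k)" and "\<not> Suc i < part xs (i - k)"
    using less_part_conjugate_iff[OF xs] by simp_all
  then have "part xs (i - k) = (i - k) + Suc k"
    using \<open>k \<le> i\<close> by linarith
  then show "\<exists>j. part xs j = j + Suc k" ..
qed

text \<open>With parts indexed from 0, the diagonal of offset c is the line i \<mapsto> c + i.
diag_count c xs is the number of leading parts lying above it; meets_diag c xs says that the
next part lies on it; diag_insert and diag_delete insert or remove a part c + diag_count c xs
at that position.\<close>

fun diag_count :: "nat \<Rightarrow> nat list \<Rightarrow> nat" where
  "diag_count c [] = 0"
| "diag_count c (x # xs) = (if c < x then Suc (diag_count (Suc c) xs) else 0)"

fun meets_diag :: "nat \<Rightarrow> nat list \<Rightarrow> bool" where
  "meets_diag c [] = False"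
| "meets_diag c (x # xs) = (if c < x then meets_diag (Suc c) xs else x = c)"

fun diag_insert :: "nat \<Rightarrow> nat list \<Rightarrow> nat list" where
  "diag_insert c [] = [c]"
| "diag_insert c (x # xs) = (if c < x then x # diag_insert (Suc c) xs else c # x # xs)"

fun diag_delete :: "nat \<Rightarrow> nat list \<Rightarrow> nat list" where
  "diag_delete c [] = []"
| "diag_delete c (x # xs) = (if c < x then x # diag_delete (Suc c) xs else xs)"

lemma meets_diag_iff:
  "nonincreasing xs \<Longrightarrow> 0 < c \<Longrightarrow> meets_diag c xs \<longleftrightarrow> (\<exists>j. part xs j = j + c)"
proof (induction xs arbitrary: c)
  case Nil
  then show ?case by simp
next
  case (Cons x xs)
  have "(\<exists>j. part (x # xs) j = j + c) \<longleftrightarrow> x = c \<or> (\<exists>j. part xs j = j + Suc c)"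
    by (metis add_Suc add_Suc_shift nat.exhaust part_Cons_0 part_Cons_Suc plus_nat.add_0)
  moreover have "part xs j \<noteq> j + Suc c" if "\<not> c < x" for j
    using part_le_hd[OF Cons.prems(1), of j] that by linarith
  ultimately show ?case
    using Cons by auto
qed

lemma diag_count_diag_insert: "diag_count c (diag_insert c xs) = diag_count c xs"
  by (induction xs arbitrary: c) auto

lemma meets_diag_diag_insert: "meets_diag c (diag_insert c xs)"
  by (induction xs arbitrary: c) auto

lemma diag_delete_diag_insert: "diag_delete c (diag_insert c xs) = xs"
  by (induction xs arbitrary: c) auto

lemma sum_list_diag_insert: "sum_list (diag_insert c xs) = sum_list xs + c + diag_count c xs"
  by (induction xs arbitrary: c) auto

lemma set_diag_insert: "set (diag_insert c xs) = insert (c + diag_count c xs) (set xs)"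
  by (induction xs arbitrary: c) auto

lemma diag_count_take: "diag_count c (take m xs) = min m (diag_count c xs)"
  by (induction xs arbitrary: c m) (auto simp: take_Cons split: nat.splits)

lemma diag_count_le_length_filter: "0 < c \<Longrightarrow> diag_count c xs \<le> length (filter (\<lambda>x. 1 < x) xs)"
  by (induction xs arbitrary: c) auto

lemma diag_insert_le: "\<forall>y\<in>set xs. y \<le> z \<Longrightarrow> c \<le> z \<Longrightarrow> \<forall>y\<in>set (diag_insert c xs). y \<le> z"
proof (induction xs arbitrary: c)
  case Nil
  then show ?case by simp
next
  case (Cons x xs)
  show ?case
  proof (cases "c < x")
    case True
    then have "\<forall>y\<in>set (diag_insert (Suc c) xs). y \<le> z"
      using Cons by (intro Cons.IH) auto
    then show ?thesis using True Cons.prems by simp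
  qed (use Cons.prems in auto)
qed

lemma nonincreasing_diag_insert: "nonincreasing xs \<Longrightarrow> nonincreasing (diag_insert c xs)"
proof (induction xs arbitrary: c)
  case Nil
  then show ?case by simp
next
  case (Cons x xs)
  show ?case
  proof (cases "c < x")
    case True
    have "\<forall>y\<in>set (diag_insert (Suc c) xs). y \<le> x"
      by (rule diag_insert_le) (use Cons.prems True in auto)
    then show ?thesis using Cons.IH[of "Suc c"] Cons.prems True by auto
  qed (use Cons.prems in auto)
qed

lemma diag_insert_diag_delete:
  "meets_diag c xs \<Longrightarrow> nonincreasing xs \<Longrightarrow> diag_insert c (diag_delete c xs) = xs"
proof (induction xs arbitrary: c)
  case Nil
  then show ?case by simp
next
  case (Cons x xs)
  show ?case
  proof (cases "c < x")
    case True
    then show ?thesis using Cons.IH[of "Suc c"] Cons.prems by auto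
  next
    case False
    then show ?thesis using Cons.prems by (cases xs) auto
  qed
qed

lemma sum_list_diag_delete:
  "meets_diag c xs \<Longrightarrow> sum_list (diag_delete c xs) + c + diag_count c xs = sum_list xs"
proof (induction xs arbitrary: c)
  case Nil
  then show ?case by simp
next
  case (Cons x xs)
  then show ?case
    using Cons.IH[of "Suc c"] by (auto split: if_splits)
qed

lemma set_diag_delete: "set (diag_delete c xs) \<subseteq> set xs"
  by (induction xs arbitrary: c) auto

lemma nonincreasing_diag_delete: "nonincreasing xs \<Longrightarrow> nonincreasing (diag_delete c xs)"
  by (induction xs arbitrary: c) (auto dest: set_diag_delete[THEN subsetD])

lemma diag_count_diag_delete_append:
  assumes "meets_diag c xs" and "nonincreasing xs" and "\<forall>y\<in>set ys. y \<le> c"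
  shows "diag_count c (diag_delete c xs @ ys) = diag_count c xs"
  using assms
proof (induction xs arbitrary: c)
  case Nil
  then show ?case by simp
next
  case (Cons x xs)
  show ?case
  proof (cases "c < x")
    case True
    have "\<forall>y\<in>set ys. y \<le> Suc c" using Cons.prems by auto
    then show ?thesis using Cons.IH[of "Suc c"] Cons.prems True by auto
  next
    case False
    then have "\<forall>y\<in>set (xs @ ys). y \<le> c"
      using Cons.prems by auto
    then have "diag_count c (xs @ ys) = 0"
      by (cases "xs @ ys") auto
    then show ?thesis using False by simp
  qed
qed

lemma length_filter_diag_delete:
  assumes "meets_diag c xs" and "nonincreasing xs" and "c + diag_count c xs \<le> w"
  shows "length (filter (\<lambda>x. w < x) (diag_delete c xs)) \<le> diag_count c xs"
  using assms
proof (induction xs arbitrary: c)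
  case Nil
  then show ?case by simp
next
  case (Cons x xs)
  show ?case
  proof (cases "c < x")
    case True
    have "length (filter (\<lambda>x. w < x) (diag_delete (Suc c) xs)) \<le> diag_count (Suc c) xs"
      by (rule Cons.IH) (use Cons.prems True in auto)
    then show ?thesis using True by auto
  next
    case False
    then have "filter (\<lambda>x. w < x) xs = []"
      using Cons.prems by (auto simp: filter_empty_conv)
    then show ?thesis using False by simp
  qed
qed

lemma diag_count_add_le:
  assumes "nonincreasing xs" and "length (filter (\<lambda>x. w < x) xs) + c \<le> w"
  shows "diag_count c xs + c \<le> w"
  using assms
proof (induction xs arbitrary: c)
  case Nil
  then show ?case by simp
next
  case (Cons x xs)
  show ?case
  proof (cases "c < x")
    case True
    have "length (filter (\<lambda>x. w < x) xs) + Suc c \<le> w"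
    proof (cases "w < x")
      case False
      then have "filter (\<lambda>x. w < x) xs = []"
        using Cons.prems by (auto simp: filter_empty_conv)
      then show ?thesis using True False by simp
    qed (use Cons.prems in simp)
    then show ?thesis
      using True Cons.IH[of "Suc c"] Cons.prems by simp
  qed (use Cons.prems in simp)
qed

lemma nonincreasing_split_ones:
  "nonincreasing xs \<Longrightarrow> \<forall>x\<in>set xs. 0 < x \<Longrightarrow>
   xs = filter (\<lambda>x. 1 < x) xs @ replicate (count_list xs 1) 1"
proof (induction xs)
  case Nil
  then show ?case by simp
next
  case (Cons x xs)
  show ?case
  proof (cases "1 < x")
    case True
    then show ?thesis using Cons by auto
  next
    case False
    then have "x = 1" and ones: "\<forall>y\<in>set xs. y = 1"
      using Cons.prems by fastforce+
    then have "xs = replicate (count_list xs 1) 1"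
      by (induction xs) auto
    then show ?thesis
      using \<open>x = 1\<close> ones by (simp add: filter_empty_conv)
  qed
qed

definition low_crank_partitions :: "nat \<Rightarrow> nat \<Rightarrow> nat list set" where
  "low_crank_partitions c n =
     {xs \<in> partitions n. length (filter (\<lambda>x. count_list xs 1 < x) xs) + c \<le> count_list xs 1}"

definition diag_partitions :: "nat \<Rightarrow> nat \<Rightarrow> nat list set" where
  "diag_partitions c n = {xs \<in> partitions n. meets_diag c xs}"

definition ones_to_diag :: "nat \<Rightarrow> nat list \<Rightarrow> nat list" where
  "ones_to_diag c xs = diag_insert c (take (length xs - (c + diag_count c xs)) xs)"

definition diag_to_ones :: "nat \<Rightarrow> nat list \<Rightarrow> nat list" where
  "diag_to_ones c xs = diag_delete c xs @ replicate (c + diag_count c xs) 1"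

lemma low_crank_partitions_eq:
  assumes "0 < c"
  shows "low_crank_partitions c n = {xs \<in> partitions n. pcrank xs \<le> - int c}"
proof -
  have "pcrank xs \<le> - int c \<longleftrightarrow> length (filter (\<lambda>x. count_list xs 1 < x) xs) + c \<le> count_list xs 1"
    for xs
  proof (cases "1 \<in> set xs")
    case False
    then have "count_list xs 1 = 0" by (simp add: count_list_0_iff)
    with False assms show ?thesis by (simp add: pcrank_def)
  qed (auto simp: pcrank_def)
  then show ?thesis
    unfolding low_crank_partitions_def by auto
qed

lemma low_crank_partitions_decompose:
  assumes xs: "xs \<in> low_crank_partitions c n" and "0 < c"
  defines "ys \<equiv> take (length xs - (c + diag_count c xs)) xs"
  shows "xs = ys @ replicate (c + diag_count c ys) 1" and "diag_count c ys = diag_count c xs"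
proof -
  define w where "w = count_list xs 1"
  define j where "j = diag_count c xs"
  define big where "big = filter (\<lambda>x. 1 < x) xs"
  have sorted: "nonincreasing xs" and pos: "\<forall>x\<in>set xs. 0 < x"
    and low: "length (filter (\<lambda>x. w < x) xs) + c \<le> w"
    using xs unfolding low_crank_partitions_def partitions_def w_def by auto
  have "j + c \<le> w"
    unfolding j_def by (rule diag_count_add_le[OF sorted low])
  moreover have "j \<le> length big"
    unfolding j_def big_def by (rule diag_count_le_length_filter[OF \<open>0 < c\<close>])
  moreover have split: "xs = big @ replicate w 1"
    unfolding big_def w_def by (rule nonincreasing_split_ones[OF sorted pos])
  ultimately have ys: "ys = big @ replicate (w - (c + j)) 1"
    unfolding ys_def j_def[symmetric] by (subst (1 2) split) (simp add: take_append)
  show "diag_count c ys = diag_count c xs"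
    unfolding ys_def diag_count_take j_def[symmetric]
    using \<open>j \<le> length big\<close> \<open>j + c \<le> w\<close> split by (simp add: length_append)
  with \<open>j + c \<le> w\<close> show "xs = ys @ replicate (c + diag_count c ys) 1"
    by (subst split) (simp add: ys j_def replicate_add[symmetric])
qed

lemma ones_to_diag_low_crank_partitions:
  assumes xs: "xs \<in> low_crank_partitions c n" and "0 < c"
  shows "ones_to_diag c xs \<in> diag_partitions c n" and "diag_to_ones c (ones_to_diag c xs) = xs"
proof -
  define ys where "ys = take (length xs - (c + diag_count c xs)) xs"
  have split: "xs = ys @ replicate (c + diag_count c ys) 1"
    and count: "diag_count c ys = diag_count c xs"
    using low_crank_partitions_decompose[OF assms] unfolding ys_def by simp_all
  have xs_part: "nonincreasing xs" "\<forall>x\<in>set xs. 0 < x" "sum_list xs = n"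
    using xs unfolding low_crank_partitions_def partitions_def by auto
  have eq: "ones_to_diag c xs = diag_insert c ys"
    unfolding ones_to_diag_def ys_def ..
  have "sum_list (diag_insert c ys) = n"
    using xs_part(3) split by (simp add: sum_list_diag_insert sum_list_replicate)
  moreover have "nonincreasing ys" "\<forall>y\<in>set ys. 0 < y"
    using xs_part(1,2) unfolding ys_def by (auto dest: in_set_takeD)
  ultimately have "diag_insert c ys \<in> partitions n"
    using \<open>0 < c\<close> by (auto simp: partitions_def nonincreasing_diag_insert set_diag_insert)
  then show "ones_to_diag c xs \<in> diag_partitions c n"
    unfolding eq diag_partitions_def by (simp add: meets_diag_diag_insert)
  show "diag_to_ones c (ones_to_diag c xs) = xs"
    unfolding eq diag_to_ones_def diag_delete_diag_insert diag_count_diag_insert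
    using split by simp
qed

lemma count_list_replicate_same: "count_list (replicate r x) x = r"
  by (induction r) auto

lemma diag_to_ones_partitions:
  assumes "meets_diag c xs" and "xs \<in> partitions n"
  shows "diag_to_ones c xs \<in> partitions n"
proof -
  define j where "j = diag_count c xs"
  define ys where "ys = diag_delete c xs"
  have "nonincreasing ys" "\<forall>y\<in>set ys. 0 < y"
    using assms(2) nonincreasing_diag_delete set_diag_delete unfolding ys_def partitions_def
    by blast+
  moreover have "sum_list ys + (c + j) = n"
    using sum_list_diag_delete[OF assms(1)] assms(2) unfolding ys_def j_def partitions_def by simp
  moreover have "nonincreasing (replicate (c + j) (1::nat))"
    by (simp add: sorted_wrt_iff_nth_less)
  ultimately show ?thesis
    unfolding diag_to_ones_def ys_def j_def
    by (auto simp: partitions_def sorted_wrt_append sum_list_replicate)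
qed

lemma diag_to_ones_diag_partitions:
  assumes xs: "xs \<in> diag_partitions c n" and "0 < c"
  shows "diag_to_ones c xs \<in> low_crank_partitions c n" and "ones_to_diag c (diag_to_ones c xs) = xs"
proof -
  define j where "j = diag_count c xs"
  define ys where "ys = diag_delete c xs"
  have meets: "meets_diag c xs" and part: "xs \<in> partitions n"
    using xs unfolding diag_partitions_def by auto
  then have sorted: "nonincreasing xs"
    unfolding partitions_def by simp
  have eq: "diag_to_ones c xs = ys @ replicate (c + j) 1"
    unfolding diag_to_ones_def ys_def j_def ..
  define w where "w = count_list (ys @ replicate (c + j) 1) 1"
  have w: "w = count_list ys 1 + (c + j)"
    unfolding w_def by (simp add: count_list_replicate_same)
  have "length (filter (\<lambda>x. w < x) ys) \<le> j"
    unfolding ys_def j_def by (rule length_filter_diag_delete[OF meets sorted]) (use w j_def in simp)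
  then have "length (filter (\<lambda>x. w < x) (ys @ replicate (c + j) 1)) + c \<le> w"
    using w by simp
  with diag_to_ones_partitions[OF meets part] show "diag_to_ones c xs \<in> low_crank_partitions c n"
    unfolding eq low_crank_partitions_def w_def by simp
  have "diag_count c (ys @ replicate (c + j) 1) = j"
    unfolding ys_def j_def by (rule diag_count_diag_delete_append[OF meets sorted]) (use \<open>0 < c\<close> in simp)
  then show "ones_to_diag c (diag_to_ones c xs) = xs"
    unfolding eq ones_to_diag_def ys_def using diag_insert_diag_delete[OF meets sorted] by simp
qed

lemma card_low_crank_partitions:
  "0 < c \<Longrightarrow> card (low_crank_partitions c n) = card (diag_partitions c n)"
  by (rule bij_betw_same_card[of "ones_to_diag c"], rule bij_betw_byWitness[where f' = "diag_to_ones c"])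
    (auto simp: ones_to_diag_low_crank_partitions diag_to_ones_diag_partitions)

lemma card_diag_partitions:
  "card (diag_partitions (Suc k) n) = card {xs \<in> partitions n. int k \<notin> rank_set xs}"
proof -
  have "diag_partitions (Suc k) n = {xs \<in> partitions n. int k \<notin> rank_set (conjugate xs)}"
    unfolding diag_partitions_def partitions_def
    using meets_diag_iff ex_part_eq_iff_not_mem_rank_set_conjugate by auto
  then show ?thesis
    using card_partitions_conjugate[where P = "\<lambda>xs. int k \<notin> rank_set xs"] by simp
qed

lemma finite_partitions: "finite (partitions n)"
proof (rule finite_subset)
  show "partitions n \<subseteq> {xs. set xs \<subseteq> {..n} \<and> length xs \<le> n}"
  proof
    fix xs assume "xs \<in> partitions n"
    then have sum: "sum_list xs = n" and pos: "\<forall>x\<in>set xs. 0 < x"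
      unfolding partitions_def by auto
    have "length xs \<le> sum_list xs"
      using pos by (induction xs) auto
    then show "xs \<in> {xs. set xs \<subseteq> {..n} \<and> length xs \<le> n}"
      using sum by (auto dest: member_le_sum_list)
  qed
qed (rule finite_lists_length_le, simp)

lemma partitions_1: "partitions 1 = {[1]}"
proof
  show "partitions 1 \<subseteq> {[1]}"
  proof
    fix xs assume "xs \<in> partitions 1"
    then have "sum_list xs = 1" and "\<forall>x\<in>set xs. 0 < x"
      unfolding partitions_def by auto
    then show "xs \<in> {[1]}"
      by (cases xs; cases "tl xs") auto
  qed
qed (simp add: partitions_def)

lemma sum_card_fibers_le:
  fixes f :: "'a \<Rightarrow> int"
  assumes "finite S"
  shows "(\<Sum>r\<in>{r. r \<le> a \<and> int (card {x \<in> S. f x = r}) \<noteq> 0}. int (card {x \<in> S. f x = r}))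
       = int (card {x \<in> S. f x \<le> a})"
proof -
  let ?T = "{x \<in> S. f x \<le> a}"
  have "{r. r \<le> a \<and> int (card {x \<in> S. f x = r}) \<noteq> 0} = f ` ?T"
    using assms by auto
  moreover have "{x \<in> S. f x = r} = {x \<in> ?T. f x = r}" if "r \<in> f ` ?T" for r
    using that by auto
  ultimately have "(\<Sum>r\<in>{r. r \<le> a \<and> int (card {x \<in> S. f x = r}) \<noteq> 0}. int (card {x \<in> S. f x = r}))
      = (\<Sum>r\<in>f ` ?T. \<Sum>x\<in>{x \<in> ?T. f x = r}. 1)"
    by simp
  also have "\<dots> = (\<Sum>x\<in>?T. 1)"
    using assms by (intro sum.group) auto
  finally show ?thesis by simp
qed

lemma N_le_eq_card: "N_le m n = int (card {xs \<in> partitions n. prank xs \<le> m})"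
  unfolding N_le_def N_def by (rule sum_card_fibers_le[OF finite_partitions])

lemma M_le_eq_card:
  assumes "m < 0"
  shows "M_le m n = int (card {xs \<in> partitions n. pcrank xs \<le> m})"
proof (cases "n = 1")
  case True
  have "pcrank [1] = -1"
    by (simp add: pcrank_def)
  then have "{xs \<in> partitions n. pcrank xs \<le> m} = (if m = -1 then {[1]} else {})"
    unfolding True partitions_1 using assms by auto
  moreover have "{r. r \<le> m \<and> M r n \<noteq> 0} = (if m = -1 then {-1} else {})"
    using assms unfolding True M_def by auto
  ultimately show ?thesis
    using True by (simp add: M_le_def M_def)
next
  case False
  then show ?thesis
    unfolding M_le_def M_def using sum_card_fibers_le[OF finite_partitions] by simp
qed

lemma card_Collect_add_card_Collect_not:
  "finite S \<Longrightarrow> card {x \<in> S. P x} + card {x \<in> S. \<not> P x} = card S"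
  by (subst card_Un_disjoint[symmetric]) (auto intro: arg_cong[where f = card])

theorem theorem2p1:
  fixes m :: int and n :: nat
  assumes "m < 0" and "1 \<le> n"
  shows "N_le (m + 1) n - M_le m n = q (- m - 1) n - p (m + 2) n"
proof -
  define k where "k = nat (- m - 1)"
  have k: "- m - 1 = int k" "m = - int (Suc k)"
    using assms(1) unfolding k_def by auto
  let ?P = "partitions n"
  have "M_le m n = int (card (low_crank_partitions (Suc k) n))"
    using M_le_eq_card[OF assms(1)] low_crank_partitions_eq[of "Suc k" n] k(2) by simp
  also have "\<dots> = int (card {xs \<in> ?P. int k \<notin> rank_set xs})"
    by (simp add: card_low_crank_partitions card_diag_partitions)
  finally have M: "M_le m n = int (card {xs \<in> ?P. int k \<notin> rank_set xs})" .
  have "p (m + 2) n = int (card {xs \<in> ?P. \<not> prank xs \<le> m + 1})"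
    unfolding p_def by (rule arg_cong[where f = "\<lambda>A. int (card A)"]) auto
  moreover have "q (- m - 1) n = int (card {xs \<in> ?P. int k \<in> rank_set xs})"
    unfolding q_def k(1) ..
  ultimately show ?thesis
    using M N_le_eq_card[of "m + 1" n]
      card_Collect_add_card_Collect_not[OF finite_partitions[of n], where P = "\<lambda>xs. prank xs \<le> m + 1"]
      card_Collect_add_card_Collect_not[OF finite_partitions[of n], where P = "\<lambda>xs. int k \<in> rank_set xs"]
    by linarith
qed

end
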